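(* If $\mathcal{X}=(X,\perp,R)$ is a monadic orthoframe, then $\mathcal{L}(\mathcal{X})=(\mathcal{L}(X,\perp),\exists_R)$ is a monadic ortholattice.
   Context: An orthoframe $(X,\perp)$ is a set with an irreflexive symmetric binary relation $\perp$; $A^\perp=\{x: a\perp x\ \forall a\in A\}$. $\mathcal{L}(X,\perp)=\{A\subseteq X: A=A^{\perp\perp}\}$ is a complete ortholattice with meets intersections, joins $(\bigcup A_i)^{\perp\perp}$, and orthocomplement $A\mapsto A^\perp$. $R[A]=\{y: x\,R\,y\text{ for some }x\in A\}$. A monadic orthoframe is $(X,\perp,R)$ with (M1) $\perp$ an orthogonality relation; (M2) $R$ reflexive and transitive; (M3) for each $x\in X$, $R[R[\{x\}]^\perp]\subseteq R[\{x\}]^\perp$. Define $\exists_RA=R[A]^{\perp\perp}$ for $A\in\mathcal{L}(X,\perp)$. A monadic ortholattice is an ortholattice with a unary $\exists$ satisfying (Q1) $\exists0=0$, (Q2) $p\le\exists p$, (Q3) $\exists(p\vee q)=\exists p\vee\exists q$, (Q4) $\exists\exists p=\exists p$, (Q5) $\exists(\exists p)^\perp=(\exists p)^\perp$. *)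

theory Defs
  imports Main
begin

definition orthoframe :: "'a set \<Rightarrow> ('a \<Rightarrow> 'a \<Rightarrow> bool) \<Rightarrow> bool" where
  "orthoframe X perp \<longleftrightarrow>
     (\<forall>x\<in>X. \<not> perp x x) \<and> (\<forall>x\<in>X. \<forall>y\<in>X. perp x y \<longrightarrow> perp y x)"

definition orth :: "'a set \<Rightarrow> ('a \<Rightarrow> 'a \<Rightarrow> bool) \<Rightarrow> 'a set \<Rightarrow> 'a set" where
  "orth X perp A = {x\<in>X. \<forall>a\<in>A. perp a x}"

definition closed_sets :: "'a set \<Rightarrow> ('a \<Rightarrow> 'a \<Rightarrow> bool) \<Rightarrow> 'a set set" where
  "closed_sets X perp = {A. A \<subseteq> X \<and> A = orth X perp (orth X perp A)}"

definition cjoin :: "'a set \<Rightarrow> ('a \<Rightarrow> 'a \<Rightarrow> bool) \<Rightarrow> 'a set \<Rightarrow> 'a set \<Rightarrow> 'a set" where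
  "cjoin X perp A B = orth X perp (orth X perp (A \<union> B))"

definition rimg :: "'a set \<Rightarrow> ('a \<Rightarrow> 'a \<Rightarrow> bool) \<Rightarrow> 'a set \<Rightarrow> 'a set" where
  "rimg X R A = {y\<in>X. \<exists>x\<in>A. R x y}"

definition monadic_orthoframe ::
  "'a set \<Rightarrow> ('a \<Rightarrow> 'a \<Rightarrow> bool) \<Rightarrow> ('a \<Rightarrow> 'a \<Rightarrow> bool) \<Rightarrow> bool" where
  "monadic_orthoframe X perp R \<longleftrightarrow>
     orthoframe X perp \<and>
     (\<forall>x\<in>X. R x x) \<and>
     (\<forall>x\<in>X. \<forall>y\<in>X. \<forall>z\<in>X. R x y \<longrightarrow> R y z \<longrightarrow> R x z) \<and>
     (\<forall>x\<in>X. rimg X R (orth X perp (rimg X R {x})) \<subseteq> orth X perp (rimg X R {x}))"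

definition exR :: "'a set \<Rightarrow> ('a \<Rightarrow> 'a \<Rightarrow> bool) \<Rightarrow> ('a \<Rightarrow> 'a \<Rightarrow> bool) \<Rightarrow> 'a set \<Rightarrow> 'a set" where
  "exR X perp R A = orth X perp (orth X perp (rimg X R A))"

definition ortholattice ::
  "'b set \<Rightarrow> ('b \<Rightarrow> 'b \<Rightarrow> bool) \<Rightarrow> ('b \<Rightarrow> 'b \<Rightarrow> 'b) \<Rightarrow> ('b \<Rightarrow> 'b \<Rightarrow> 'b)
     \<Rightarrow> ('b \<Rightarrow> 'b) \<Rightarrow> 'b \<Rightarrow> 'b \<Rightarrow> bool" where
  "ortholattice L le meet join compl zero one \<longleftrightarrow>
     \<comment> \<open>partial order\<close>
     (\<forall>a\<in>L. le a a) \<and>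
     (\<forall>a\<in>L. \<forall>b\<in>L. le a b \<longrightarrow> le b a \<longrightarrow> a = b) \<and>
     (\<forall>a\<in>L. \<forall>b\<in>L. \<forall>c\<in>L. le a b \<longrightarrow> le b c \<longrightarrow> le a c) \<and>
     \<comment> \<open>meet is the greatest lower bound\<close>
     (\<forall>a\<in>L. \<forall>b\<in>L. meet a b \<in> L \<and> le (meet a b) a \<and> le (meet a b) b \<and>
        (\<forall>c\<in>L. le c a \<longrightarrow> le c b \<longrightarrow> le c (meet a b))) \<and>
     \<comment> \<open>join is the least upper bound\<close>
     (\<forall>a\<in>L. \<forall>b\<in>L. join a b \<in> L \<and> le a (join a b) \<and> le b (join a b) \<and>
        (\<forall>c\<in>L. le a c \<longrightarrow> le b c \<longrightarrow> le (join a b) c)) \<and>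
     \<comment> \<open>bounds\<close>
     zero \<in> L \<and> one \<in> L \<and> (\<forall>a\<in>L. le zero a \<and> le a one) \<and>
     \<comment> \<open>orthocomplement\<close>
     (\<forall>a\<in>L. compl a \<in> L \<and> compl (compl a) = a \<and>
        meet a (compl a) = zero \<and> join a (compl a) = one) \<and>
     (\<forall>a\<in>L. \<forall>b\<in>L. le a b \<longrightarrow> le (compl b) (compl a))"

definition monadic_ortholattice ::
  "'b set \<Rightarrow> ('b \<Rightarrow> 'b \<Rightarrow> bool) \<Rightarrow> ('b \<Rightarrow> 'b \<Rightarrow> 'b) \<Rightarrow> ('b \<Rightarrow> 'b \<Rightarrow> 'b)
     \<Rightarrow> ('b \<Rightarrow> 'b) \<Rightarrow> 'b \<Rightarrow> 'b \<Rightarrow> ('b \<Rightarrow> 'b) \<Rightarrow> bool" where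
  "monadic_ortholattice L le meet join compl zero one ex \<longleftrightarrow>
     ortholattice L le meet join compl zero one \<and>
     (\<forall>p\<in>L. ex p \<in> L) \<and>
     ex zero = zero \<and>
     (\<forall>p\<in>L. le p (ex p)) \<and>
     (\<forall>p\<in>L. \<forall>q\<in>L. ex (join p q) = join (ex p) (ex q)) \<and>
     (\<forall>p\<in>L. ex (ex p) = ex p) \<and>
     (\<forall>p\<in>L. ex (compl (ex p)) = compl (ex p))"

end

theory Submission
  imports Defs
begin

(* Biorthogonal closure makes L(X,\<bottom>) an ortholattice for any orthoframe. For the quantifier,
   the heart of the matter is that the orthocomplement of any R-image is again R-closed: this is
   axiom (M3) spread from singletons to arbitrary sets. It implies that R maps the closure of A
   into the closure of R[A], so that \<exists>\<^sub>R only depends on the closure of its argument; (Q3) and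
   (Q4) follow from this together with R[A \<union> B] = R[A] \<union> R[B] and R[R[A]] = R[A], and (Q5)
   holds because the orthocomplement of \<exists>\<^sub>R p is that of R[p], which is already R-closed. *)

lemma orth_subset: "orth X perp A \<subseteq> X"
  by (auto simp: orth_def)

lemma orth_antimono: "A \<subseteq> B \<Longrightarrow> orth X perp B \<subseteq> orth X perp A"
  by (auto simp: orth_def)

lemma orth_Un: "orth X perp (A \<union> B) = orth X perp A \<inter> orth X perp B"
  by (auto simp: orth_def)

lemma orth_empty: "orth X perp {} = X"
  by (auto simp: orth_def)

lemma orth_carrier: "orthoframe X perp \<Longrightarrow> orth X perp X = {}"
  by (auto simp: orth_def orthoframe_def)

lemma Int_orth_empty: "orthoframe X perp \<Longrightarrow> A \<inter> orth X perp A = {}"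
  by (auto simp: orth_def orthoframe_def)

lemma subset_orth_orth: "orthoframe X perp \<Longrightarrow> A \<subseteq> X \<Longrightarrow> A \<subseteq> orth X perp (orth X perp A)"
  by (auto simp: orth_def orthoframe_def)

lemma orth_orth_orth:
  assumes "orthoframe X perp" "A \<subseteq> X"
  shows "orth X perp (orth X perp (orth X perp A)) = orth X perp A"
proof
  show "orth X perp A \<subseteq> orth X perp (orth X perp (orth X perp A))"
    using subset_orth_orth[OF assms(1) orth_subset] .
  show "orth X perp (orth X perp (orth X perp A)) \<subseteq> orth X perp A"
    by (rule orth_antimono[OF subset_orth_orth[OF assms]])
qed

lemma closed_setsD: "A \<in> closed_sets X perp \<Longrightarrow> A \<subseteq> X"
  and closed_sets_orth_orth: "A \<in> closed_sets X perp \<Longrightarrow> orth X perp (orth X perp A) = A"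
  by (simp_all add: closed_sets_def)

lemma orth_in_closed_sets:
  "orthoframe X perp \<Longrightarrow> A \<subseteq> X \<Longrightarrow> orth X perp A \<in> closed_sets X perp"
  by (simp add: closed_sets_def orth_orth_orth orth_subset)

lemma Int_in_closed_sets:
  assumes O: "orthoframe X perp" and A: "A \<in> closed_sets X perp" and B: "B \<in> closed_sets X perp"
  shows "A \<inter> B \<in> closed_sets X perp"
proof -
  have "orth X perp (orth X perp (A \<inter> B))
      \<subseteq> orth X perp (orth X perp A) \<inter> orth X perp (orth X perp B)"
    by (simp add: orth_antimono)
  moreover have "A \<inter> B \<subseteq> orth X perp (orth X perp (A \<inter> B))"
    using closed_setsD[OF A] by (intro subset_orth_orth[OF O]) blast
  ultimately show ?thesis
    using A B by (auto simp: closed_sets_def)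
qed

lemma cjoin_upper:
  "orthoframe X perp \<Longrightarrow> A \<subseteq> X \<Longrightarrow> B \<subseteq> X \<Longrightarrow> A \<union> B \<subseteq> cjoin X perp A B"
  unfolding cjoin_def by (rule subset_orth_orth) auto

lemma cjoin_least:
  assumes "A \<subseteq> C" "B \<subseteq> C" "C \<in> closed_sets X perp"
  shows "cjoin X perp A B \<subseteq> C"
proof -
  have "cjoin X perp A B \<subseteq> orth X perp (orth X perp C)"
    unfolding cjoin_def using assms(1,2) by (intro orth_antimono) auto
  then show ?thesis
    using assms(3) by (simp add: closed_sets_orth_orth)
qed

lemma cjoin_orth:
  assumes "orthoframe X perp" "A \<in> closed_sets X perp"
  shows "cjoin X perp A (orth X perp A) = X"
proof -
  have "orth X perp (A \<union> orth X perp A) = {}"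
    using assms Int_orth_empty[of X perp "orth X perp A"]
    by (simp add: orth_Un closed_sets_orth_orth Int_commute)
  then show ?thesis
    by (simp add: cjoin_def orth_empty)
qed

lemma closed_sets_ortholattice:
  assumes O: "orthoframe X perp"
  shows "ortholattice (closed_sets X perp) (\<subseteq>) (\<inter>) (cjoin X perp) (orth X perp) (orth X perp X) X"
  unfolding ortholattice_def
proof (intro conjI ballI)
  fix A B assume A: "A \<in> closed_sets X perp" and B: "B \<in> closed_sets X perp"
  show "A \<inter> B \<in> closed_sets X perp"
    using Int_in_closed_sets[OF O A B] .
  show "cjoin X perp A B \<in> closed_sets X perp"
    unfolding cjoin_def by (rule orth_in_closed_sets[OF O orth_subset])
  show "A \<subseteq> cjoin X perp A B" "B \<subseteq> cjoin X perp A B"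
    using cjoin_upper[OF O closed_setsD[OF A] closed_setsD[OF B]] by auto
  show "A \<subseteq> B \<longrightarrow> orth X perp B \<subseteq> orth X perp A"
    by (simp add: orth_antimono)
  show "A \<subseteq> C \<longrightarrow> B \<subseteq> C \<longrightarrow> cjoin X perp A B \<subseteq> C" if "C \<in> closed_sets X perp" for C
    using cjoin_least[OF _ _ that] by blast
next
  fix A assume A: "A \<in> closed_sets X perp"
  show "orth X perp A \<in> closed_sets X perp" "orth X perp (orth X perp A) = A"
    using orth_in_closed_sets[OF O closed_setsD[OF A]] closed_sets_orth_orth[OF A] by auto
  show "A \<inter> orth X perp A = orth X perp X"
    using O by (simp add: orth_carrier Int_orth_empty)
  show "cjoin X perp A (orth X perp A) = X"
    using cjoin_orth[OF O A] .
  show "orth X perp X \<subseteq> A" "A \<subseteq> X"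
    using O closed_setsD[OF A] by (simp_all add: orth_carrier)
next
  show "orth X perp X \<in> closed_sets X perp" "X \<in> closed_sets X perp"
    using orth_in_closed_sets[OF O, of X] orth_in_closed_sets[OF O, of "{}"]
    by (simp_all add: orth_empty)
qed auto

lemma monadic_orthoframeD:
  assumes "monadic_orthoframe X perp R"
  shows monadic_orthoframe_orthoframe: "orthoframe X perp"
    and monadic_orthoframe_refl: "\<forall>x\<in>X. R x x"
    and monadic_orthoframe_trans: "\<forall>x\<in>X. \<forall>y\<in>X. \<forall>z\<in>X. R x y \<longrightarrow> R y z \<longrightarrow> R x z"
    and monadic_orthoframe_M3:
      "x \<in> X \<Longrightarrow> rimg X R (orth X perp (rimg X R {x})) \<subseteq> orth X perp (rimg X R {x})"
  using assms unfolding monadic_orthoframe_def by blast+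

lemma rimg_subset: "rimg X R A \<subseteq> X"
  by (auto simp: rimg_def)

lemma rimg_mono: "A \<subseteq> B \<Longrightarrow> rimg X R A \<subseteq> rimg X R B"
  by (auto simp: rimg_def)

lemma rimg_Un: "rimg X R (A \<union> B) = rimg X R A \<union> rimg X R B"
  by (auto simp: rimg_def)

lemma subset_rimg: "\<forall>x\<in>X. R x x \<Longrightarrow> A \<subseteq> X \<Longrightarrow> A \<subseteq> rimg X R A"
  by (auto simp: rimg_def)

lemma rimg_rimg:
  assumes "\<forall>x\<in>X. R x x" "\<forall>x\<in>X. \<forall>y\<in>X. \<forall>z\<in>X. R x y \<longrightarrow> R y z \<longrightarrow> R x z" "A \<subseteq> X"
  shows "rimg X R (rimg X R A) = rimg X R A"
proof
  show "rimg X R (rimg X R A) \<subseteq> rimg X R A"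
    using assms(2,3) by (auto simp: rimg_def)
  show "rimg X R A \<subseteq> rimg X R (rimg X R A)"
    by (rule subset_rimg[of X R, OF assms(1) rimg_subset])
qed

lemma rimg_orth_rimg:
  assumes M: "monadic_orthoframe X perp R" and A: "A \<subseteq> X"
  shows "rimg X R (orth X perp (rimg X R A)) \<subseteq> orth X perp (rimg X R A)"
proof -
  have "rimg X R (orth X perp (rimg X R A)) \<subseteq> orth X perp (rimg X R {x})" if "x \<in> A" for x
  proof -
    have "rimg X R (orth X perp (rimg X R A)) \<subseteq> rimg X R (orth X perp (rimg X R {x}))"
      using that by (intro rimg_mono orth_antimono) auto
    also have "\<dots> \<subseteq> orth X perp (rimg X R {x})"
      using monadic_orthoframe_M3[OF M] A that by blast
    finally show ?thesis .
  qed
  moreover have "X \<inter> (\<Inter>x\<in>A. orth X perp (rimg X R {x})) \<subseteq> orth X perp (rimg X R A)"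
    by (auto simp: orth_def rimg_def)
  ultimately show ?thesis
    using rimg_subset[of X R] by blast
qed

lemma rimg_orth_orth:
  assumes M: "monadic_orthoframe X perp R" and A: "A \<subseteq> X"
  shows "rimg X R (orth X perp (orth X perp A)) \<subseteq> orth X perp (orth X perp (rimg X R A))"
proof
  note refl = monadic_orthoframe_refl[OF M]
  fix y assume "y \<in> rimg X R (orth X perp (orth X perp A))"
  then obtain x where x: "x \<in> orth X perp (orth X perp A)" "R x y" and "y \<in> X"
    by (auto simp: rimg_def)
  show "y \<in> orth X perp (orth X perp (rimg X R A))"
    unfolding orth_def[of X perp "orth X perp _"]
  proof (intro CollectI conjI ballI)
    show "y \<in> X" by fact
    fix z assume z: "z \<in> orth X perp (rimg X R A)"
    then have zX: "z \<in> X"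
      by (auto simp: orth_def)
    have "rimg X R {z} \<subseteq> rimg X R (orth X perp (rimg X R A))"
      using z by (intro rimg_mono) auto
    also have "\<dots> \<subseteq> orth X perp (rimg X R A)"
      by (rule rimg_orth_rimg[OF M A])
    also have "\<dots> \<subseteq> orth X perp A"
      by (rule orth_antimono[OF subset_rimg[of X R, OF refl A]])
    finally have "x \<in> orth X perp (rimg X R {z})"
      using x(1) by (auto simp: orth_def)
    with x(2) \<open>y \<in> X\<close> have "y \<in> rimg X R (orth X perp (rimg X R {z}))"
      by (auto simp: rimg_def)
    with monadic_orthoframe_M3[OF M zX] have "y \<in> orth X perp (rimg X R {z})"
      by blast
    moreover have "z \<in> rimg X R {z}"
      using refl zX by (auto simp: rimg_def)
    ultimately show "perp z y"
      by (auto simp: orth_def)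
  qed
qed

lemma exR_orth_orth:
  assumes M: "monadic_orthoframe X perp R" and A: "A \<subseteq> X"
  shows "exR X perp R (orth X perp (orth X perp A)) = exR X perp R A"
proof
  note O = monadic_orthoframe_orthoframe[OF M]
  have "exR X perp R (orth X perp (orth X perp A))
      \<subseteq> orth X perp (orth X perp (orth X perp (orth X perp (rimg X R A))))"
    unfolding exR_def by (intro orth_antimono rimg_orth_orth[OF M A])
  also have "\<dots> = exR X perp R A"
    by (simp add: exR_def orth_orth_orth[OF O rimg_subset])
  finally show "exR X perp R (orth X perp (orth X perp A)) \<subseteq> exR X perp R A" .
  show "exR X perp R A \<subseteq> exR X perp R (orth X perp (orth X perp A))"
    unfolding exR_def by (intro orth_antimono rimg_mono subset_orth_orth[OF O A])
qed

lemma exR_in_closed_sets: "orthoframe X perp \<Longrightarrow> exR X perp R A \<in> closed_sets X perp"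
  unfolding exR_def by (intro orth_in_closed_sets orth_subset)

lemma exR_bot: "orthoframe X perp \<Longrightarrow> exR X perp R (orth X perp X) = orth X perp X"
  by (simp add: exR_def orth_carrier rimg_def orth_empty)

lemma subset_exR:
  assumes "\<forall>x\<in>X. R x x" "A \<in> closed_sets X perp"
  shows "A \<subseteq> exR X perp R A"
proof -
  have "orth X perp (orth X perp A) \<subseteq> exR X perp R A"
    unfolding exR_def using assms by (intro orth_antimono subset_rimg closed_setsD)
  then show ?thesis
    using assms(2) by (simp add: closed_sets_orth_orth)
qed

lemma exR_cjoin:
  assumes M: "monadic_orthoframe X perp R" and "A \<subseteq> X" "B \<subseteq> X"
  shows "exR X perp R (cjoin X perp A B) = cjoin X perp (exR X perp R A) (exR X perp R B)"
proof -
  note O = monadic_orthoframe_orthoframe[OF M]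
  have "exR X perp R (cjoin X perp A B) = exR X perp R (A \<union> B)"
    unfolding cjoin_def using assms by (intro exR_orth_orth) auto
  also have "\<dots> = cjoin X perp (exR X perp R A) (exR X perp R B)"
    by (simp add: exR_def cjoin_def rimg_Un orth_Un orth_orth_orth[OF O rimg_subset])
  finally show ?thesis .
qed

lemma exR_exR:
  assumes M: "monadic_orthoframe X perp R" and A: "A \<subseteq> X"
  shows "exR X perp R (exR X perp R A) = exR X perp R A"
proof -
  have rimg_idem: "rimg X R (rimg X R A) = rimg X R A"
    using A by (intro rimg_rimg monadic_orthoframe_refl[OF M] monadic_orthoframe_trans[OF M])
  have "exR X perp R (exR X perp R A) = exR X perp R (rimg X R A)"
    unfolding exR_def[of X perp R A] by (rule exR_orth_orth[OF M rimg_subset])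
  also have "\<dots> = exR X perp R A"
    unfolding exR_def by (simp only: rimg_idem)
  finally show ?thesis .
qed

lemma exR_orth_exR:
  assumes M: "monadic_orthoframe X perp R" and A: "A \<subseteq> X"
  shows "exR X perp R (orth X perp (exR X perp R A)) = orth X perp (exR X perp R A)"
proof -
  note O = monadic_orthoframe_orthoframe[OF M] and refl = monadic_orthoframe_refl[OF M]
  have R_closed: "rimg X R (orth X perp (rimg X R A)) = orth X perp (rimg X R A)"
    using rimg_orth_rimg[OF M A] subset_rimg[of X R, OF refl orth_subset] by blast
  show ?thesis
    by (simp add: exR_def orth_orth_orth[OF O rimg_subset] R_closed)
qed

theorem mainTheorem18:
  fixes X :: "'a set" and perp R :: "'a \<Rightarrow> 'a \<Rightarrow> bool"
  assumes "monadic_orthoframe X perp R"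
  shows "monadic_ortholattice (closed_sets X perp) (\<subseteq>) (\<inter>) (cjoin X perp)
           (orth X perp) (orth X perp X) X (exR X perp R)"
proof -
  note O = monadic_orthoframe_orthoframe[OF assms]
    and refl = monadic_orthoframe_refl[OF assms]
  show ?thesis
    unfolding monadic_ortholattice_def
  proof (intro conjI ballI)
    fix A B assume A: "A \<in> closed_sets X perp" and B: "B \<in> closed_sets X perp"
    show "exR X perp R A \<in> closed_sets X perp"
      by (rule exR_in_closed_sets[OF O])
    show "A \<subseteq> exR X perp R A"
      by (rule subset_exR[of X R, OF refl A])
    show "exR X perp R (exR X perp R A) = exR X perp R A"
      by (rule exR_exR[OF assms closed_setsD[OF A]])
    show "exR X perp R (orth X perp (exR X perp R A)) = orth X perp (exR X perp R A)"
      by (rule exR_orth_exR[OF assms closed_setsD[OF A]])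
    show "exR X perp R (cjoin X perp A B) = cjoin X perp (exR X perp R A) (exR X perp R B)"
      by (rule exR_cjoin[OF assms closed_setsD[OF A] closed_setsD[OF B]])
  qed (simp_all add: closed_sets_ortholattice[OF O] exR_bot[OF O])
qed

end
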